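(* Let $\eta>0$ and $(u,v)\in\mathring C$ be such that $u/v$ is at distance at least $\eta$ from each $\mu_i$, $1\le i\le n$. Then for every $x\in\mathbb X_{u,v}$ and every $z\in\mathbb R^N$ with $\langle z,x\rangle=0=\langle z,x\rangle_{-1}$, $$\sum_{J\in\mathcal J}\frac1{|x|^4}\langle T_J(x),z\rangle^2+\sum_{i=1}^n\frac1{|x|^2}\langle R_i(x),z\rangle^2\ge c_1(\eta)|z|^2,$$ where $c_1(\eta)>0$ depends only on $\eta$, $N$ and $(\lambda_\ell)$.
   Context: Let $n\ge4$, $N=2n$, $1=\lambda_1=\lambda_2<\lambda_3=\lambda_4<\dots<\lambda_{N-1}=\lambda_N$, $\mu_i=\lambda_{2i}$. $\langle x,y\rangle=\sum x_\ell y_\ell$, $|x|^2=\sum x_\ell^2$, $\langle x,y\rangle_{-1}=\sum x_\ell y_\ell/\lambda_\ell$, $|x|_{-1}^2=\sum x_\ell^2/\lambda_\ell$. $C=\{(u,v):0\le v\le u\le\lambda_Nv\}$, interior $\mathring C$; $\mathbb X_{u,v}=\{x:|x|^2=u,|x|_{-1}^2=v\}$. $\mathcal J$ is the set of triples $J=(k,\ell,m)$ in $\{1,\dots,N\}$ with $\lambda_k<\lambda_\ell<\lambda_m$, and $T_J(x)$ is the vector $\sum x_ax_b(1/\lambda_a-1/\lambda_b)e_c$, the sum over the three cyclic permutations $(a,b,c)$ of $J$ ($e_c$ the canonical basis); $R_i(x)=x_{2i}e_{2i-1}-x_{2i-1}e_{2i}$, $1\le i\le n$. *)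

theory Defs
  imports "HOL-Analysis.Analysis"
begin

text \<open>Vectors of R^N are represented as functions nat => real; only the
coordinates 1..N matter.\<close>

definition ip :: "nat \<Rightarrow> (nat \<Rightarrow> real) \<Rightarrow> (nat \<Rightarrow> real) \<Rightarrow> real" where
  "ip N x y = (\<Sum>l\<in>{1..N}. x l * y l)"

definition ipm :: "(nat \<Rightarrow> real) \<Rightarrow> nat \<Rightarrow> (nat \<Rightarrow> real) \<Rightarrow> (nat \<Rightarrow> real) \<Rightarrow> real" where
  "ipm lam N x y = (\<Sum>l\<in>{1..N}. x l * y l / lam l)"

definition sqn :: "nat \<Rightarrow> (nat \<Rightarrow> real) \<Rightarrow> real" where
  "sqn N x = (\<Sum>l\<in>{1..N}. (x l)^2)"

definition sqnm :: "(nat \<Rightarrow> real) \<Rightarrow> nat \<Rightarrow> (nat \<Rightarrow> real) \<Rightarrow> real" where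
  "sqnm lam N x = (\<Sum>l\<in>{1..N}. (x l)^2 / lam l)"

definition coneC :: "(nat \<Rightarrow> real) \<Rightarrow> nat \<Rightarrow> (real \<times> real) set" where
  "coneC lam N = {(u, v). 0 \<le> v \<and> v \<le> u \<and> u \<le> lam N * v}"

definition XX :: "(nat \<Rightarrow> real) \<Rightarrow> nat \<Rightarrow> real \<Rightarrow> real \<Rightarrow> (nat \<Rightarrow> real) set" where
  "XX lam N u v = {x. sqn N x = u \<and> sqnm lam N x = v}"

definition JJ :: "(nat \<Rightarrow> real) \<Rightarrow> nat \<Rightarrow> (nat \<times> nat \<times> nat) set" where
  "JJ lam N = {(k, l, m). k \<in> {1..N} \<and> l \<in> {1..N} \<and> m \<in> {1..N} \<and>
                          lam k < lam l \<and> lam l < lam m}"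

definition ebasis :: "nat \<Rightarrow> nat \<Rightarrow> real" where
  "ebasis c = (\<lambda>j. if j = c then 1 else 0)"

definition cyc :: "nat \<times> nat \<times> nat \<Rightarrow> (nat \<times> nat \<times> nat) list" where
  "cyc J = (case J of (k, l, m) \<Rightarrow> [(k, l, m), (l, m, k), (m, k, l)])"

definition TJ :: "(nat \<Rightarrow> real) \<Rightarrow> nat \<times> nat \<times> nat \<Rightarrow> (nat \<Rightarrow> real) \<Rightarrow> nat \<Rightarrow> real" where
  "TJ lam J x = (\<lambda>j. sum_list (map (\<lambda>(a, b, c). x a * x b * (1 / lam a - 1 / lam b) * ebasis c j) (cyc J)))"

definition Ri :: "nat \<Rightarrow> (nat \<Rightarrow> real) \<Rightarrow> nat \<Rightarrow> real" where
  "Ri i x = (\<lambda>j. x (2*i) * ebasis (2*i - 1) j - x (2*i - 1) * ebasis (2*i) j)"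

end

theory Submission imports Defs begin

(* The left-hand side is invariant under scaling x and quadratic in z, so it suffices to bound it
   from below on the compact set of admissible pairs with |x| = |z| = 1, i.e. to show that it never
   vanishes there. If all the forms <T_J(x), z> and <R_i(x), z> vanish, then z is proportional to x
   on every eigenspace, and the T_J relations give z_c = \<phi>(1/\<lambda>_c) x_c for an affine \<phi> as soon as
   x has nonzero components in two different eigenspaces, which the distance of u/v from the \<mu>_i
   guarantees. Then |z|^2 = \<alpha> <z,x> + \<beta> <z,x>_{-1} = 0. *)

lemma strict_mono_on_atLeastAtMost_SucI:
  fixes f :: "nat \<Rightarrow> 'a::order"
  assumes "\<And>i. a \<le> i \<Longrightarrow> i < b \<Longrightarrow> f i < f (Suc i)"
  shows "strict_mono_on {a..b} f"
proof (rule strict_mono_onI)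
  fix i j assume i: "i \<in> {a..b}" and "j \<in> {a..b}" "i < j"
  then have "Suc i \<le> j" "j \<le> b" by auto
  then show "f i < f j"
  proof (induction j rule: dec_induct)
    case base then show ?case using i assms by simp
  next
    case (step m)
    then have "f i < f m" "f m < f (Suc m)" using i assms[of m] by auto
    then show ?case by (rule order.strict_trans)
  qed
qed

lemma compact_PiE_UNIV:
  fixes S :: "'i \<Rightarrow> 'a::topological_space set"
  assumes "\<And>i. compact (S i)"
  shows "compact (Pi\<^sub>E UNIV S)"
proof -
  have "compactin (product_topology (\<lambda>i. euclidean) UNIV) (Pi\<^sub>E UNIV S)"
    using assms by (simp add: compactin_PiE)
  then show ?thesis by (simp add: euclidean_product_topology)
qed

lemma closed_Ball_Collect:
  assumes "\<And>i. i \<in> I \<Longrightarrow> closed {x. P i x}"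
  shows "closed {x. \<forall>i\<in>I. P i x}"
proof -
  have "{x. \<forall>i\<in>I. P i x} = (\<Inter>i\<in>I. {x. P i x})" by auto
  then show ?thesis using assms by (simp add: closed_INT)
qed

lemma compact_pos_imp_uniformly_pos:
  fixes f :: "'a::topological_space \<Rightarrow> real"
  assumes "compact S" "continuous_on S f" "\<forall>p\<in>S. f p > 0"
  obtains c where "c > 0" "\<forall>p\<in>S. c \<le> f p"
proof (cases "S = {}")
  case False
  then obtain p0 where "p0 \<in> S" "\<forall>p\<in>S. f p0 \<le> f p"
    using continuous_attains_inf[OF assms(1) False assms(2)] by blast
  then show ?thesis using that assms(3) by blast
qed (use that[of 1] in auto)

lemma continuous_on_fst_coordinate [continuous_intros]:
  "continuous_on A (\<lambda>p::('i \<Rightarrow> 'a::topological_space) \<times> 'b::topological_space. fst p k)"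
  using continuous_on_product_then_coordinatewise[OF continuous_on_fst[OF continuous_on_id]] .

lemma continuous_on_snd_coordinate [continuous_intros]:
  "continuous_on A (\<lambda>p::'b::topological_space \<times> ('i \<Rightarrow> 'a::topological_space). snd p k)"
  using continuous_on_product_then_coordinatewise[OF continuous_on_snd[OF continuous_on_id]] .

lemma sqn_nonneg: "sqn N x \<ge> 0"
  unfolding sqn_def by (simp add: sum_nonneg)

lemma sqn_pos_imp_nonzero_coordinate:
  assumes "sqn N x > 0"
  obtains a where "a \<in> {1..N}" "x a \<noteq> 0"
proof -
  have "\<not> (\<forall>a\<in>{1..N}. x a = 0)"
    using assms unfolding sqn_def by (metis (mono_tags, lifting) less_irrefl power_zero_numeral sum.neutral)
  then show thesis using that by blast
qed

lemma sqnm_pos: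
  assumes "\<forall>a\<in>{1..N}. lam a > 0" "sqn N x > 0"
  shows "sqnm lam N x > 0"
proof -
  obtain a where "a \<in> {1..N}" "x a \<noteq> 0" using sqn_pos_imp_nonzero_coordinate[OF assms(2)] .
  then show ?thesis
    unfolding sqnm_def using assms(1) by (intro sum_pos2[of _ a]) (auto intro!: divide_nonneg_pos)
qed

lemma sqn_eq_if_single_level:
  assumes "\<And>a. a \<in> {1..N} \<Longrightarrow> x a \<noteq> 0 \<Longrightarrow> lam a = \<mu>" "\<mu> \<noteq> 0"
  shows "sqn N x = \<mu> * sqnm lam N x"
proof -
  have "(x a)^2 = \<mu> * ((x a)^2 / lam a)" if "a \<in> {1..N}" for a
    using assms that by (cases "x a = 0") auto
  then show ?thesis unfolding sqn_def sqnm_def sum_distrib_left by (rule sum.cong[OF refl])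
qed

lemma interior_coneC_pos:
  assumes "(u, v) \<in> interior (coneC lam N)"
  shows "0 < v" "v \<le> u"
proof -
  have "coneC lam N \<subseteq> {p. (0, 1) \<bullet> p \<ge> (0::real)}" by (auto simp: coneC_def)
  then have "interior (coneC lam N) \<subseteq> {p. (0, 1) \<bullet> p > (0::real)}"
    by (metis interior_mono interior_halfspace_ge zero_neq_one prod.inject zero_prod_def)
  then show "0 < v" using assms by auto
  show "v \<le> u" using assms interior_subset by (fastforce simp: coneC_def)
qed

definition TJ_form :: "(nat \<Rightarrow> real) \<Rightarrow> nat \<times> nat \<times> nat \<Rightarrow> (nat \<Rightarrow> real) \<Rightarrow> (nat \<Rightarrow> real) \<Rightarrow> real" where
  "TJ_form lam J x z = (case J of (k, l, m) \<Rightarrow>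
     x k * x l * (1 / lam k - 1 / lam l) * z m + x l * x m * (1 / lam l - 1 / lam m) * z k
     + x m * x k * (1 / lam m - 1 / lam k) * z l)"

definition Ri_form :: "nat \<Rightarrow> (nat \<Rightarrow> real) \<Rightarrow> (nat \<Rightarrow> real) \<Rightarrow> real" where
  "Ri_form i x z = x (2*i) * z (2*i - 1) - x (2*i - 1) * z (2*i)"

lemma sum_ebasis:
  assumes "c \<in> {1..N}"
  shows "(\<Sum>j\<in>{1..N}. a * ebasis c j * z j) = a * z c"
proof -
  have "(\<Sum>j\<in>{1..N}. a * ebasis c j * z j) = (\<Sum>j\<in>{1..N}. if j = c then a * z j else 0)"
    by (intro sum.cong) (auto simp: ebasis_def)
  then show ?thesis using assms by simp
qed

lemma ip_TJ:
  assumes "k \<in> {1..N}" "l \<in> {1..N}" "m \<in> {1..N}"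
  shows "ip N (TJ lam (k, l, m) x) z = TJ_form lam (k, l, m) x z"
proof -
  let ?A = "x k * x l * (1 / lam k - 1 / lam l)"
  let ?B = "x l * x m * (1 / lam l - 1 / lam m)"
  let ?C = "x m * x k * (1 / lam m - 1 / lam k)"
  have "ip N (TJ lam (k, l, m) x) z = (\<Sum>j\<in>{1..N}. ?A * ebasis m j * z j + ?B * ebasis k j * z j
      + ?C * ebasis l j * z j)"
    unfolding ip_def TJ_def cyc_def by (simp add: algebra_simps)
  also have "\<dots> = ?A * z m + ?B * z k + ?C * z l"
    unfolding sum.distrib sum_ebasis[OF assms(1)] sum_ebasis[OF assms(2)] sum_ebasis[OF assms(3)] ..
  finally show ?thesis by (simp add: TJ_form_def)
qed

lemma ip_Ri:
  assumes "1 \<le> i" "2*i \<le> N"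
  shows "ip N (Ri i x) z = Ri_form i x z"
proof -
  have "ip N (Ri i x) z = (\<Sum>j\<in>{1..N}. x (2*i) * ebasis (2*i - 1) j * z j)
      - (\<Sum>j\<in>{1..N}. x (2*i - 1) * ebasis (2*i) j * z j)"
    unfolding ip_def Ri_def by (simp add: algebra_simps sum_subtractf)
  also have "\<dots> = Ri_form i x z"
    using assms unfolding Ri_form_def by (subst (1 2) sum_ebasis) auto
  finally show ?thesis .
qed

lemma finite_JJ: "finite (JJ lam N)"
proof (rule finite_subset)
  show "JJ lam N \<subseteq> {1..N} \<times> {1..N} \<times> {1..N}" by (auto simp: JJ_def)
qed auto

lemma TJ_form_cyclic: "TJ_form lam (b, c, a) x z = TJ_form lam (a, b, c) x z"
  unfolding TJ_form_def by (simp add: algebra_simps)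

lemma TJ_form_swap: "TJ_form lam (b, a, c) x z = - TJ_form lam (a, b, c) x z"
  unfolding TJ_form_def by (simp add: algebra_simps)

lemma TJ_form_eq_0_of_distinct_levels:
  assumes "a \<in> {1..N}" "b \<in> {1..N}" "c \<in> {1..N}"
    and "lam a \<noteq> lam b" "lam b \<noteq> lam c" "lam a \<noteq> lam c"
    and TJ: "\<forall>J\<in>JJ lam N. TJ_form lam J x z = 0"
  shows "TJ_form lam (a, b, c) x z = 0"
proof -
  have ordered: "TJ_form lam (k, l, m) x z = 0"
    if "{k, l, m} \<subseteq> {1..N}" "lam k < lam l" "lam l < lam m" for k l m
    using TJ that by (auto simp: JJ_def)
  have "TJ_form lam (b, c, a) x z = TJ_form lam (a, b, c) x z"
    "TJ_form lam (c, a, b) x z = TJ_form lam (a, b, c) x z"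
    "TJ_form lam (b, a, c) x z = - TJ_form lam (a, b, c) x z"
    "TJ_form lam (a, c, b) x z = - TJ_form lam (a, b, c) x z"
    "TJ_form lam (c, b, a) x z = - TJ_form lam (a, b, c) x z"
    by (metis TJ_form_swap TJ_form_cyclic)+
  moreover consider "lam a < lam b" "lam b < lam c" | "lam a < lam c" "lam c < lam b"
    | "lam b < lam a" "lam a < lam c" | "lam b < lam c" "lam c < lam a"
    | "lam c < lam a" "lam a < lam b" | "lam c < lam b" "lam b < lam a"
    using assms(4-6) by linarith
  ultimately show ?thesis
    by cases (use assms(1-3) ordered[of a b c] ordered[of a c b] ordered[of b a c]
        ordered[of b c a] ordered[of c a b] ordered[of c b a] in auto)
qed

lemma TJ_form_eq_of_proportional:
  assumes "z a = ta * x a" "z b = tb * x b"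
  shows "TJ_form lam (a, b, c) x z = x a * x b *
    ((1 / lam a - 1 / lam b) * z c - ((1 / lam c - 1 / lam b) * ta + (1 / lam a - 1 / lam c) * tb) * x c)"
  unfolding TJ_form_def using assms by (simp add: algebra_simps)

lemma sqn_eq_0_if_forms_vanish:
  assumes pos: "\<forall>c\<in>{1..N}. lam c > 0"
    and same_level: "\<And>a c. a \<in> {1..N} \<Longrightarrow> c \<in> {1..N} \<Longrightarrow> lam a = lam c \<Longrightarrow> x a * z c = x c * z a"
    and TJ: "\<forall>J\<in>JJ lam N. TJ_form lam J x z = 0"
    and ab: "a \<in> {1..N}" "b \<in> {1..N}" "lam a \<noteq> lam b" "x a \<noteq> 0" "x b \<noteq> 0"
    and orth: "ip N z x = 0" "ipm lam N z x = 0"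
  shows "sqn N z = 0"
proof -
  define s where "s c = 1 / lam c" for c
  define ta where "ta = z a / x a"
  define tb where "tb = z b / x b"
  define \<phi> where "\<phi> \<sigma> = ((\<sigma> - s b) * ta + (s a - \<sigma>) * tb) / (s a - s b)" for \<sigma>
  define \<alpha> where "\<alpha> = (s a * tb - s b * ta) / (s a - s b)"
  define \<beta> where "\<beta> = (ta - tb) / (s a - s b)"
  have sab: "s a \<noteq> s b" using ab pos by (auto simp: s_def)
  have za: "z a = ta * x a" and zb: "z b = tb * x b" using ab by (simp_all add: ta_def tb_def)
  (* \<phi> interpolates z/x affinely in 1/\<lambda> through the levels of a and b. *)
  have coord: "z c = \<phi> (s c) * x c" if c: "c \<in> {1..N}" for c
  proof -
    consider "lam c = lam a" | "lam c = lam b" | "lam c \<noteq> lam a" "lam c \<noteq> lam b" by blast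
    then show ?thesis
    proof cases
      case 1
      then have "x a * z c = x a * (ta * x c)" using same_level[OF ab(1) c] za by (simp add: mult.commute)
      then show ?thesis using ab(4) sab 1 by (simp add: \<phi>_def s_def field_simps)
    next
      case 2
      then have "x b * z c = x b * (tb * x c)" using same_level[OF ab(2) c] zb by (simp add: mult.commute)
      then show ?thesis using ab(5) sab 2 by (simp add: \<phi>_def s_def field_simps)
    next
      case 3
      then have "TJ_form lam (a, b, c) x z = 0"
        using TJ_form_eq_0_of_distinct_levels[OF ab(1,2) c ab(3) _ _ TJ] by auto
      then have "(s a - s b) * z c = ((s c - s b) * ta + (s a - s c) * tb) * x c"
        using ab(4,5) unfolding TJ_form_eq_of_proportional[OF za zb] s_def by simp
      then show ?thesis using sab by (simp add: \<phi>_def field_simps)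
    qed
  qed
  have "sqn N z = (\<Sum>c\<in>{1..N}. z c * (\<phi> (s c) * x c))"
    unfolding sqn_def power2_eq_square using coord by (intro sum.cong) auto
  also have "\<dots> = (\<Sum>c\<in>{1..N}. \<alpha> * (z c * x c) + \<beta> * (z c * x c / lam c))"
  proof -
    have "\<phi> \<sigma> = \<alpha> + \<beta> * \<sigma>" for \<sigma>
      using sab by (simp add: \<phi>_def \<alpha>_def \<beta>_def diff_divide_distrib[symmetric] add_divide_distrib[symmetric]
          eq_divide_eq algebra_simps)
    then show ?thesis by (simp add: s_def algebra_simps)
  qed
  also have "\<dots> = \<alpha> * ip N z x + \<beta> * ipm lam N z x"
    unfolding ip_def ipm_def by (simp add: sum.distrib sum_distrib_left)
  finally show ?thesis using orth by simp
qed

definition energy :: "(nat \<Rightarrow> real) \<Rightarrow> nat \<Rightarrow> (nat \<Rightarrow> real) \<Rightarrow> (nat \<Rightarrow> real) \<Rightarrow> real" where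
  "energy lam n x z = (\<Sum>J\<in>JJ lam (2*n). (TJ_form lam J x z)^2) / (sqn (2*n) x)^2
     + (\<Sum>i=1..n. (Ri_form i x z)^2) / sqn (2*n) x"

lemma sum_ip_TJ_Ri_eq_energy:
  "(\<Sum>J\<in>JJ lam (2*n). (ip (2*n) (TJ lam J x) z)^2 / (sqn (2*n) x)^2)
     + (\<Sum>i=1..n. (ip (2*n) (Ri i x) z)^2 / sqn (2*n) x) = energy lam n x z"
proof -
  have "(\<Sum>J\<in>JJ lam (2*n). (ip (2*n) (TJ lam J x) z)^2) = (\<Sum>J\<in>JJ lam (2*n). (TJ_form lam J x z)^2)"
    by (intro sum.cong) (auto simp: JJ_def ip_TJ)
  moreover have "(\<Sum>i=1..n. (ip (2*n) (Ri i x) z)^2) = (\<Sum>i=1..n. (Ri_form i x z)^2)"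
    by (intro sum.cong) (auto simp: ip_Ri)
  ultimately show ?thesis
    unfolding energy_def sum_divide_distrib[symmetric] by simp
qed

lemma energy_nonneg: "energy lam n x z \<ge> 0"
  unfolding energy_def by (intro add_nonneg_nonneg divide_nonneg_nonneg sum_nonneg sqn_nonneg) auto

definition rescale :: "nat \<Rightarrow> real \<Rightarrow> (nat \<Rightarrow> real) \<Rightarrow> nat \<Rightarrow> real" where
  "rescale N s y = (\<lambda>l. if l \<in> {1..N} then y l / s else 0)"

lemma sqn_rescale: "sqn N (rescale N s y) = sqn N y / s^2"
  unfolding sqn_def rescale_def sum_divide_distrib by (rule sum.cong) (auto simp: power_divide)

lemma sqnm_rescale: "sqnm lam N (rescale N s y) = sqnm lam N y / s^2"
  unfolding sqnm_def rescale_def sum_divide_distrib by (rule sum.cong) (auto simp: power_divide)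

lemma ip_rescale: "ip N (rescale N t w) (rescale N s y) = ip N w y / (t * s)"
  unfolding ip_def rescale_def sum_divide_distrib by (rule sum.cong) auto

lemma ipm_rescale: "ipm lam N (rescale N t w) (rescale N s y) = ipm lam N w y / (t * s)"
  unfolding ipm_def rescale_def sum_divide_distrib by (rule sum.cong) auto

lemma TJ_form_rescale:
  assumes "J \<in> JJ lam N"
  shows "TJ_form lam J (rescale N s x) (rescale N t z) = TJ_form lam J x z / (s^2 * t)"
  using assms by (cases J) (auto simp: JJ_def TJ_form_def rescale_def power2_eq_square
      add_divide_distrib diff_divide_distrib mult_ac)

lemma Ri_form_rescale:
  assumes "1 \<le> i" "2*i \<le> N"
  shows "Ri_form i (rescale N s x) (rescale N t z) = Ri_form i x z / (s * t)"
  using assms by (auto simp: Ri_form_def rescale_def diff_divide_distrib)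

lemma energy_rescale:
  assumes "s \<noteq> 0"
  shows "energy lam n (rescale (2*n) s x) (rescale (2*n) t z) = energy lam n x z / t^2"
proof -
  have T: "(\<Sum>J\<in>JJ lam (2*n). (TJ_form lam J (rescale (2*n) s x) (rescale (2*n) t z))^2)
      = (\<Sum>J\<in>JJ lam (2*n). (TJ_form lam J x z)^2) / ((s^2)^2 * t^2)"
    unfolding sum_divide_distrib by (intro sum.cong) (auto simp: TJ_form_rescale power_divide power_mult_distrib)
  have R: "(\<Sum>i=1..n. (Ri_form i (rescale (2*n) s x) (rescale (2*n) t z))^2)
      = (\<Sum>i=1..n. (Ri_form i x z)^2) / (s^2 * t^2)"
    unfolding sum_divide_distrib by (intro sum.cong) (auto simp: Ri_form_rescale power_divide power_mult_distrib)
  show ?thesis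
    using assms unfolding energy_def sqn_rescale T R
    by (cases "sqn (2*n) x = 0"; cases "t = 0") (simp_all add: field_simps power2_eq_square)
qed

(* The condition |u/v - \<mu>\<^sub>i| \<ge> \<eta> multiplied by v, which makes it closed and invariant
   under scaling of x. *)
definition ratio_separated :: "(nat \<Rightarrow> real) \<Rightarrow> nat \<Rightarrow> real \<Rightarrow> (nat \<Rightarrow> real) \<Rightarrow> bool" where
  "ratio_separated lam n \<eta> x \<longleftrightarrow>
     (\<forall>i\<in>{1..n}. \<eta> * sqnm lam (2*n) x \<le> \<bar>sqn (2*n) x - lam (2*i) * sqnm lam (2*n) x\<bar>)"

lemma ratio_separatedI:
  assumes "sqnm lam (2*n) x > 0"
    and "\<forall>i\<in>{1..n}. \<eta> \<le> \<bar>sqn (2*n) x / sqnm lam (2*n) x - lam (2*i)\<bar>"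
  shows "ratio_separated lam n \<eta> x"
  unfolding ratio_separated_def
proof
  fix i assume "i \<in> {1..n}"
  let ?v = "sqnm lam (2*n) x"
  have "\<eta> * ?v \<le> \<bar>sqn (2*n) x / ?v - lam (2*i)\<bar> * ?v"
    using assms \<open>i \<in> {1..n}\<close> by (simp add: mult_right_mono)
  also have "\<dots> = \<bar>sqn (2*n) x - lam (2*i) * ?v\<bar>"
  proof -
    have "sqn (2*n) x - lam (2*i) * ?v = (sqn (2*n) x / ?v - lam (2*i)) * ?v"
      using assms(1) by (simp add: field_simps)
    then show ?thesis using assms(1) by (simp add: abs_mult)
  qed
  finally show "\<eta> * ?v \<le> \<bar>sqn (2*n) x - lam (2*i) * ?v\<bar>" .
qed

lemma ratio_separated_rescale:
  assumes "s \<noteq> 0"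
  shows "ratio_separated lam n \<eta> (rescale (2*n) s x) \<longleftrightarrow> ratio_separated lam n \<eta> x"
proof -
  have "\<eta> * (q / s^2) \<le> \<bar>p / s^2 - m * (q / s^2)\<bar> \<longleftrightarrow> \<eta> * q \<le> \<bar>p - m * q\<bar>" for p q m :: real
  proof -
    have "\<bar>p / s^2 - m * (q / s^2)\<bar> = \<bar>p - m * q\<bar> / s^2"
      by (simp add: diff_divide_distrib[symmetric] abs_divide)
    then show ?thesis using assms by (simp add: divide_le_cancel)
  qed
  then show ?thesis unfolding ratio_separated_def sqn_rescale sqnm_rescale by simp
qed

definition unit_box :: "nat \<Rightarrow> (nat \<Rightarrow> real) set" where
  "unit_box N = Pi\<^sub>E UNIV (\<lambda>l. if l \<in> {1..N} then {-1..1} else {0})"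

lemma compact_unit_box: "compact (unit_box N)"
  unfolding unit_box_def by (rule compact_PiE_UNIV) auto

lemma rescale_in_unit_box:
  assumes "sqn N (rescale N s y) = 1"
  shows "rescale N s y \<in> unit_box N"
proof -
  have "rescale N s y l \<in> {-1..1}" if "l \<in> {1..N}" for l
  proof -
    have "(rescale N s y l)^2 \<le> sqn N (rescale N s y)"
      unfolding sqn_def using that by (intro member_le_sum) auto
    then have "\<bar>rescale N s y l\<bar> \<le> 1" using assms abs_square_le_1 by metis
    then show ?thesis by (simp add: abs_le_iff)
  qed
  then show ?thesis unfolding unit_box_def by (intro PiE_I) (auto simp: rescale_def)
qed

(* The box only pins the coordinates outside 1..N to 0, which makes the set compact. *)
definition admissible_pairs :: "(nat \<Rightarrow> real) \<Rightarrow> nat \<Rightarrow> real \<Rightarrow> ((nat \<Rightarrow> real) \<times> (nat \<Rightarrow> real)) set" where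
  "admissible_pairs lam n \<eta> = (unit_box (2*n) \<times> unit_box (2*n)) \<inter> {(x, z).
     sqn (2*n) x = 1 \<and> sqn (2*n) z = 1 \<and> ratio_separated lam n \<eta> x \<and>
     ip (2*n) z x = 0 \<and> ipm lam (2*n) z x = 0}"

lemma compact_admissible_pairs: "compact (admissible_pairs lam n \<eta>)"
  unfolding admissible_pairs_def ratio_separated_def sqn_def sqnm_def ip_def ipm_def case_prod_beta
    divide_inverse
  by (intro compact_Int_closed compact_Times compact_unit_box closed_Collect_conj closed_Collect_eq
      closed_Ball_Collect closed_Collect_le continuous_intros)

lemma continuous_on_TJ_form [continuous_intros]:
  "continuous_on A (\<lambda>p. TJ_form lam J (fst p) (snd p))"
  by (cases J) (simp add: TJ_form_def continuous_intros)

lemma continuous_on_energy: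
  assumes "\<forall>p\<in>A. sqn (2*n) (fst p) \<noteq> 0"
  shows "continuous_on A (\<lambda>p. energy lam n (fst p) (snd p))"
  unfolding energy_def Ri_form_def using assms
  by (intro continuous_intros) (simp_all add: sqn_def continuous_intros)

locale paired_spectrum =
  fixes n :: nat and lam :: "nat \<Rightarrow> real"
  assumes lam1: "lam 1 = 1"
    and pairs: "\<forall>i\<in>{1..n}. lam (2*i - 1) = lam (2*i)"
    and incr: "\<forall>i\<in>{1..<n}. lam (2*i) < lam (2*i + 1)"
begin

lemma strict_mono_on_mu: "strict_mono_on {1..n} (\<lambda>i. lam (2*i))"
proof (rule strict_mono_on_atLeastAtMost_SucI)
  fix i assume "1 \<le> i" "i < n"
  then have "lam (2*i) < lam (2*i + 1)" using incr by simp
  also have "lam (2*i + 1) = lam (2*Suc i)" using pairs[rule_format, of "Suc i"] \<open>i < n\<close> by simp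
  finally show "lam (2*i) < lam (2*Suc i)" .
qed

lemma pair_index:
  assumes "a \<in> {1..2*n}"
  obtains i where "i \<in> {1..n}" "a = 2*i - 1 \<or> a = 2*i" "lam a = lam (2*i)"
proof -
  define i where "i = (a + 1) div 2"
  have i: "i \<in> {1..n}" "a = 2*i - 1 \<or> a = 2*i" using assms by (auto simp: i_def)
  then have "lam a = lam (2*i)" using pairs by auto
  with i that show thesis by blast
qed

lemma lam_ge_1:
  assumes "a \<in> {1..2*n}"
  shows "1 \<le> lam a"
proof -
  obtain i where i: "i \<in> {1..n}" "lam a = lam (2*i)" using pair_index[OF assms] by blast
  then have "lam (2*1 - 1) = lam (2*1)" using pairs[rule_format, of 1] by auto
  then have "lam (2*1) = 1" using lam1 by simp
  moreover have "lam (2*1) \<le> lam (2*i)" using i by (intro strict_mono_on_leD[OF strict_mono_on_mu]) auto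
  ultimately show ?thesis using i by simp
qed

lemma lam_pos: "\<forall>a\<in>{1..2*n}. lam a > 0"
  using lam_ge_1 by fastforce

lemma same_level_proportional:
  assumes R: "\<forall>i\<in>{1..n}. Ri_form i x z = 0"
    and "a \<in> {1..2*n}" "c \<in> {1..2*n}" "lam a = lam c"
  shows "x a * z c = x c * z a"
proof -
  obtain i where i: "i \<in> {1..n}" "a = 2*i - 1 \<or> a = 2*i" "lam a = lam (2*i)"
    using pair_index[OF assms(2)] .
  obtain j where j: "j \<in> {1..n}" "c = 2*j - 1 \<or> c = 2*j" "lam c = lam (2*j)"
    using pair_index[OF assms(3)] .
  have "j = i" using strict_mono_on_eqD[OF strict_mono_on_mu, of i j] i j assms(4) by simp
  then show ?thesis using i j R by (auto simp: Ri_form_def algebra_simps)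
qed

lemma two_levels_in_support:
  assumes "sqn (2*n) x > 0" "\<forall>i\<in>{1..n}. sqn (2*n) x \<noteq> lam (2*i) * sqnm lam (2*n) x"
  obtains a b where "a \<in> {1..2*n}" "b \<in> {1..2*n}" "lam a \<noteq> lam b" "x a \<noteq> 0" "x b \<noteq> 0"
proof -
  obtain a where a: "a \<in> {1..2*n}" "x a \<noteq> 0" using sqn_pos_imp_nonzero_coordinate[OF assms(1)] .
  obtain i where i: "i \<in> {1..n}" "lam a = lam (2*i)" using pair_index[OF a(1)] by blast
  have "\<exists>b\<in>{1..2*n}. x b \<noteq> 0 \<and> lam b \<noteq> lam a"
  proof (rule ccontr)
    assume "\<not> ?thesis"
    then have "\<And>b. b \<in> {1..2*n} \<Longrightarrow> x b \<noteq> 0 \<Longrightarrow> lam b = lam a" by blast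
    moreover have "lam a \<noteq> 0" using lam_pos a(1) by fastforce
    ultimately have "sqn (2*n) x = lam a * sqnm lam (2*n) x" by (rule sqn_eq_if_single_level)
    then show False using assms(2)[rule_format, OF i(1)] i(2) by simp
  qed
  then obtain b where "b \<in> {1..2*n}" "x b \<noteq> 0" "lam a \<noteq> lam b" by auto
  then show thesis using that[OF a(1)] a(2) by blast
qed

lemma energy_pos:
  assumes "\<eta> > 0" "(x, z) \<in> admissible_pairs lam n \<eta>"
  shows "energy lam n x z > 0"
proof (rule ccontr)
  assume "\<not> energy lam n x z > 0"
  then have "energy lam n x z = 0" using energy_nonneg[of lam n x z] by simp
  moreover have x1: "sqn (2*n) x = 1" and z1: "sqn (2*n) z = 1" and sep: "ratio_separated lam n \<eta> x"
    and orth: "ip (2*n) z x = 0" "ipm lam (2*n) z x = 0"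
    using assms(2) by (auto simp: admissible_pairs_def)
  ultimately have "(\<Sum>J\<in>JJ lam (2*n). (TJ_form lam J x z)^2) = 0" "(\<Sum>i=1..n. (Ri_form i x z)^2) = 0"
    unfolding energy_def by (simp_all add: add_nonneg_eq_0_iff sum_nonneg)
  then have TJ: "\<forall>J\<in>JJ lam (2*n). TJ_form lam J x z = 0" and R: "\<forall>i\<in>{1..n}. Ri_form i x z = 0"
    by (simp_all add: sum_nonneg_eq_0_iff finite_JJ)
  have "sqnm lam (2*n) x > 0" using sqnm_pos[OF lam_pos] x1 by simp
  then have neq: "\<forall>i\<in>{1..n}. sqn (2*n) x \<noteq> lam (2*i) * sqnm lam (2*n) x"
    using sep assms(1) unfolding ratio_separated_def by (metis abs_zero mult_pos_pos not_le right_minus_eq)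
  obtain a b where "a \<in> {1..2*n}" "b \<in> {1..2*n}" "lam a \<noteq> lam b" "x a \<noteq> 0" "x b \<noteq> 0"
    by (rule two_levels_in_support[OF _ neq]) (simp add: x1)
  then have "sqn (2*n) z = 0"
    using sqn_eq_0_if_forms_vanish[OF lam_pos same_level_proportional[OF R] TJ] orth by blast
  with z1 show False by simp
qed

lemma uniform_lower_bound:
  assumes "\<eta> > 0"
  obtains c where "c > 0"
    "\<And>x z. sqn (2*n) x > 0 \<Longrightarrow> ratio_separated lam n \<eta> x \<Longrightarrow> ip (2*n) z x = 0 \<Longrightarrow>
       ipm lam (2*n) z x = 0 \<Longrightarrow> c * sqn (2*n) z \<le> energy lam n x z"
proof -
  obtain c where "c > 0" and c: "\<forall>p\<in>admissible_pairs lam n \<eta>. c \<le> energy lam n (fst p) (snd p)"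
  proof (rule compact_pos_imp_uniformly_pos[OF compact_admissible_pairs continuous_on_energy])
    show "\<forall>p\<in>admissible_pairs lam n \<eta>. sqn (2*n) (fst p) \<noteq> 0"
      by (auto simp: admissible_pairs_def)
    show "\<forall>p\<in>admissible_pairs lam n \<eta>. 0 < energy lam n (fst p) (snd p)"
      using energy_pos[OF assms] by auto
  qed
  have "c * sqn (2*n) z \<le> energy lam n x z"
    if x: "sqn (2*n) x > 0" and sep: "ratio_separated lam n \<eta> x"
      and orth: "ip (2*n) z x = 0" "ipm lam (2*n) z x = 0" for x z
  proof (cases "sqn (2*n) z = 0")
    case True
    then show ?thesis by (simp add: energy_nonneg)
  next
    case False
    then have z: "sqn (2*n) z > 0" using sqn_nonneg[of "2*n" z] by simp
    define s where "s = sqrt (sqn (2*n) x)"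
    define t where "t = sqrt (sqn (2*n) z)"
    have s: "s > 0" "s^2 = sqn (2*n) x" and t: "t > 0" "t^2 = sqn (2*n) z"
      using x z by (simp_all add: s_def t_def)
    let ?x = "rescale (2*n) s x" and ?z = "rescale (2*n) t z"
    have "sqn (2*n) ?x = 1" "sqn (2*n) ?z = 1"
      using s t x z by (simp_all add: sqn_rescale)
    then have "(?x, ?z) \<in> admissible_pairs lam n \<eta>"
      using s t sep orth
      by (simp add: admissible_pairs_def rescale_in_unit_box ratio_separated_rescale ip_rescale ipm_rescale)
    then have "c \<le> energy lam n x z / sqn (2*n) z"
      using c energy_rescale[of s] s t by fastforce
    then show ?thesis using z by (simp add: pos_le_divide_eq)
  qed
  with \<open>c > 0\<close> show thesis using that by blast
qed

end

theorem propositionA3: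
  fixes n :: nat and lam :: "nat \<Rightarrow> real" and \<eta> :: real
  assumes n4: "n \<ge> 4"
    and lam1: "lam 1 = 1"
    and pairs: "\<forall>i\<in>{1..n}. lam (2*i - 1) = lam (2*i)"
    and incr: "\<forall>i\<in>{1..<n}. lam (2*i) < lam (2*i + 1)"
    and eta: "\<eta> > 0"
  shows "\<exists>c>0. \<forall>u v x z.
     (u, v) \<in> interior (coneC lam (2*n)) \<and>
     (\<forall>i\<in>{1..n}. \<bar>u / v - lam (2*i)\<bar> \<ge> \<eta>) \<and>
     x \<in> XX lam (2*n) u v \<and>
     ip (2*n) z x = 0 \<and> ipm lam (2*n) z x = 0 \<longrightarrow>
     (\<Sum>J\<in>JJ lam (2*n). (ip (2*n) (TJ lam J x) z)^2 / (sqn (2*n) x)^2)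
       + (\<Sum>i=1..n. (ip (2*n) (Ri i x) z)^2 / sqn (2*n) x)
       \<ge> c * sqn (2*n) z"
proof -
  interpret paired_spectrum n lam using lam1 pairs incr by unfold_locales
  obtain c where "c > 0" and bound: "\<And>x z. sqn (2*n) x > 0 \<Longrightarrow> ratio_separated lam n \<eta> x \<Longrightarrow>
      ip (2*n) z x = 0 \<Longrightarrow> ipm lam (2*n) z x = 0 \<Longrightarrow> c * sqn (2*n) z \<le> energy lam n x z"
    using uniform_lower_bound[OF eta] by blast
  show ?thesis
  proof (intro exI[of _ c] conjI allI impI; (elim conjE)?)
    fix u v x z
    assume cone: "(u, v) \<in> interior (coneC lam (2*n))"
      and sep: "\<forall>i\<in>{1..n}. \<bar>u / v - lam (2*i)\<bar> \<ge> \<eta>"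
      and x: "x \<in> XX lam (2*n) u v"
      and orth: "ip (2*n) z x = 0" "ipm lam (2*n) z x = 0"
    have "0 < v" "v \<le> u" "sqn (2*n) x = u" "sqnm lam (2*n) x = v"
      using interior_coneC_pos[OF cone] x by (auto simp: XX_def)
    then have "c * sqn (2*n) z \<le> energy lam n x z"
      using bound orth sep ratio_separatedI[of lam n x \<eta>] by simp
    then show "c * sqn (2*n) z \<le> (\<Sum>J\<in>JJ lam (2*n). (ip (2*n) (TJ lam J x) z)^2 / (sqn (2*n) x)^2)
       + (\<Sum>i=1..n. (ip (2*n) (Ri i x) z)^2 / sqn (2*n) x)"
      unfolding sum_ip_TJ_Ri_eq_energy .
  qed (rule \<open>c > 0\<close>)
qed

end
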